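(* Let $G$ be a group acting on the right on a set $X$, let $S$ be a finite set generating $G$ as a monoid, and let $x_0\in X$. For a word $w=w_1\cdots w_\ell$ over $S$ let $\mathcal O(w)=\{x_0,\,x_0w_\ell,\,x_0w_{\ell-1}w_\ell,\dots,x_0w_1w_2\cdots w_\ell\}$, $\delta(w)=\#\mathcal O(w)$, and $\Delta(n)=\max\{\delta(w): w \text{ a word over } S,\ |w|=n\}$. Then: if $G$ is finitely generated, the $\sim$-equivalence class of $\Delta$ does not depend on the choice of the finite generating set $S$; and if $G$ acts transitively on $X$, the $\sim$-equivalence class of $\Delta$ does not depend on the choice of $x_0$.
   Context: For functions $f,g:\mathbb N\to\mathbb R_+$, write $g\preceq f$ if there is $C>0$ with $g(n)\le f(Cn)$ for all sufficiently large $n$, and $f\sim g$ if $f\preceq g$ and $g\preceq f$. $\mathcal O(w)$ is called the inverted orbit of $w$ and $\Delta$ the inverted orbit growth function. *)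

theory Defs
  imports "HOL-Algebra.Group"
begin

definition right_action :: "('a, 'b) monoid_scheme \<Rightarrow> 'x set \<Rightarrow> ('x \<Rightarrow> 'a \<Rightarrow> 'x) \<Rightarrow> bool" where
  "right_action G X act \<longleftrightarrow>
     (\<forall>x\<in>X. \<forall>g\<in>carrier G. act x g \<in> X) \<and>
     (\<forall>x\<in>X. act x \<one>\<^bsub>G\<^esub> = x) \<and>
     (\<forall>x\<in>X. \<forall>g\<in>carrier G. \<forall>h\<in>carrier G. act (act x g) h = act x (g \<otimes>\<^bsub>G\<^esub> h))"

definition transitive_action :: "('a, 'b) monoid_scheme \<Rightarrow> 'x set \<Rightarrow> ('x \<Rightarrow> 'a \<Rightarrow> 'x) \<Rightarrow> bool" where
  "transitive_action G X act \<longleftrightarrow> (\<forall>x\<in>X. \<forall>y\<in>X. \<exists>g\<in>carrier G. act x g = y)"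

definition word_prod :: "('a, 'b) monoid_scheme \<Rightarrow> 'a list \<Rightarrow> 'a" where
  "word_prod G w = foldr (\<lambda>a b. a \<otimes>\<^bsub>G\<^esub> b) w \<one>\<^bsub>G\<^esub>"

definition monoid_generates :: "('a, 'b) monoid_scheme \<Rightarrow> 'a set \<Rightarrow> bool" where
  "monoid_generates G S \<longleftrightarrow> S \<subseteq> carrier G \<and> (\<forall>g\<in>carrier G. \<exists>w\<in>lists S. g = word_prod G w)"

definition inverted_orbit :: "('a, 'b) monoid_scheme \<Rightarrow> ('x \<Rightarrow> 'a \<Rightarrow> 'x) \<Rightarrow> 'x \<Rightarrow> 'a list \<Rightarrow> 'x set" where
  "inverted_orbit G act x0 w = insert x0 {act x0 (word_prod G (drop i w)) | i. i \<le> length w}"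

definition delta :: "('a, 'b) monoid_scheme \<Rightarrow> ('x \<Rightarrow> 'a \<Rightarrow> 'x) \<Rightarrow> 'x \<Rightarrow> 'a list \<Rightarrow> nat" where
  "delta G act x0 w = card (inverted_orbit G act x0 w)"

definition Delta :: "('a, 'b) monoid_scheme \<Rightarrow> ('x \<Rightarrow> 'a \<Rightarrow> 'x) \<Rightarrow> 'a set \<Rightarrow> 'x \<Rightarrow> nat \<Rightarrow> nat" where
  "Delta G act S x0 n = Max {delta G act x0 w | w. w \<in> lists S \<and> length w = n}"

definition growth_le :: "(nat \<Rightarrow> nat) \<Rightarrow> (nat \<Rightarrow> nat) \<Rightarrow> bool" where
  "growth_le g f \<longleftrightarrow> (\<exists>C::nat. C > 0 \<and> (\<forall>\<^sub>F n in sequentially. g n \<le> f (C * n)))"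

definition growth_equiv :: "(nat \<Rightarrow> nat) \<Rightarrow> (nat \<Rightarrow> nat) \<Rightarrow> bool" where
  "growth_equiv f g \<longleftrightarrow> growth_le f g \<and> growth_le g f"

end

theory Submission
  imports Defs
begin

text \<open>
  Changing the generating set from \<open>T\<close> to \<open>S\<close> and the base point from \<open>x\<^sub>0\<close> to \<open>x\<^sub>0 g\<close> are
  handled at once. Rewrite each letter \<open>t \<in> T\<close> as a word \<open>c t\<close> over \<open>S\<close> representing
  \<open>g t g\<inverse>\<close>, and let \<open>v\<close> be a word over \<open>S\<close> representing \<open>g\<close>. For a word \<open>w\<close> over \<open>T\<close>,
  every suffix product of \<open>c(w) v\<close> taken at a letter boundary of \<open>w\<close> equals \<open>g\<close> times the
  corresponding suffix product of \<open>w\<close>, so the inverted orbit of \<open>w\<close> at \<open>x\<^sub>0 g\<close> is contained in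
  the inverted orbit of \<open>c(w) v\<close> at \<open>x\<^sub>0\<close>. The word \<open>c(w) v\<close> has length at most \<open>C |w|\<close>,
  and \<open>\<Delta>\<close> is monotone; hence the growth function for \<open>(T, x\<^sub>0 g)\<close> is \<open>\<preceq>\<close> the one for
  \<open>(S, x\<^sub>0)\<close>. Taking \<open>g = 1\<close> gives independence of the generating set; transitivity
  provides \<open>g\<close> with \<open>x\<^sub>0 g = x\<^sub>1\<close> and the reverse one.
\<close>

lemma word_prod_Nil [simp]: "word_prod G [] = \<one>\<^bsub>G\<^esub>"
  by (simp add: word_prod_def)

lemma word_prod_Cons [simp]: "word_prod G (x # w) = x \<otimes>\<^bsub>G\<^esub> word_prod G w"
  by (simp add: word_prod_def)

lemma suffix_in_inverted_orbit: "act x0 (word_prod G s) \<in> inverted_orbit G act x0 (p @ s)"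
  unfolding inverted_orbit_def by (auto intro!: exI[of _ "length p"])

lemma inverted_orbit_append_left:
  "inverted_orbit G act x0 w \<subseteq> inverted_orbit G act x0 (u @ w)"
proof -
  have "act x0 (word_prod G (drop i w)) \<in> inverted_orbit G act x0 (u @ w)" for i
    using suffix_in_inverted_orbit[where p = "u @ take i w" and s = "drop i w"] by simp
  then show ?thesis unfolding inverted_orbit_def by auto
qed

lemma finite_inverted_orbit: "finite (inverted_orbit G act x0 w)"
proof -
  have "{act x0 (word_prod G (drop i w)) | i. i \<le> length w}
          = (\<lambda>i. act x0 (word_prod G (drop i w))) ` {..length w}"
    by auto
  then show ?thesis unfolding inverted_orbit_def by simp
qed

lemma finite_words_of_length: "finite S \<Longrightarrow> finite {w. w \<in> lists S \<and> length w = n}"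
  using finite_lists_length_eq[of S n] by (simp add: in_lists_conv_set subset_code(1))

lemma delta_le_Delta:
  assumes "finite S" "w \<in> lists S"
  shows "delta G act x0 w \<le> Delta G act S x0 (length w)"
  unfolding Delta_def using assms finite_words_of_length[OF assms(1)]
  by (auto intro!: Max_ge simp: setcompr_eq_image)

lemma Delta_attained:
  assumes "finite S" "S \<noteq> {}"
  obtains w where "w \<in> lists S" "length w = n" "Delta G act S x0 n = delta G act x0 w"
proof -
  obtain s where "s \<in> S" using assms(2) by auto
  then have "replicate n s \<in> {w. w \<in> lists S \<and> length w = n}" by auto
  then have "{delta G act x0 w | w. w \<in> lists S \<and> length w = n} \<noteq> {}" by blast
  from Max_in[OF _ this] show ?thesis
    using that finite_words_of_length[OF assms(1)] unfolding Delta_def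
    by (auto simp: setcompr_eq_image)
qed

lemma Delta_mono:
  assumes "finite S" "S \<noteq> {}" "n \<le> m"
  shows "Delta G act S x0 n \<le> Delta G act S x0 m"
proof -
  obtain w where w: "w \<in> lists S" "length w = n" "Delta G act S x0 n = delta G act x0 w"
    using Delta_attained[OF assms(1,2)] .
  obtain s where s: "s \<in> S" using assms(2) by auto
  define w' where "w' = replicate (m - n) s @ w"
  have "delta G act x0 w \<le> delta G act x0 w'"
    unfolding delta_def w'_def
    by (intro card_mono finite_inverted_orbit inverted_orbit_append_left)
  also have "\<dots> \<le> Delta G act S x0 (length w')"
    using s w unfolding w'_def by (intro delta_le_Delta[OF assms(1)]) auto
  finally show ?thesis using w assms(3) unfolding w'_def by simp
qed

lemma length_concat_map_le:
  "(\<And>t. t \<in> set w \<Longrightarrow> length (c t) \<le> K) \<Longrightarrow> length (concat (map c w)) \<le> K * length w"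
  by (induction w) (auto simp: add_mono)

context group
begin

lemma word_prod_closed: "set w \<subseteq> carrier G \<Longrightarrow> word_prod G w \<in> carrier G"
  by (induction w) auto

lemma word_prod_append:
  "set u \<subseteq> carrier G \<Longrightarrow> set w \<subseteq> carrier G \<Longrightarrow>
     word_prod G (u @ w) = word_prod G u \<otimes> word_prod G w"
  by (induction u) (auto simp: word_prod_closed m_assoc)

lemma inv_cancel_left: "g \<in> carrier G \<Longrightarrow> x \<in> carrier G \<Longrightarrow> inv g \<otimes> (g \<otimes> x) = x"
  by (simp add: m_assoc [symmetric])

lemma word_prod_concat_conjugates:
  assumes g: "g \<in> carrier G" and u: "set u \<subseteq> carrier G"
    and c: "\<And>t. t \<in> set u \<Longrightarrow> set (c t) \<subseteq> carrier G \<and> word_prod G (c t) = g \<otimes> t \<otimes> inv g"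
  shows "word_prod G (concat (map c u)) \<otimes> g = g \<otimes> word_prod G u"
  using u c
proof (induction u)
  case Nil
  then show ?case using g by simp
next
  case (Cons t u)
  then have t: "t \<in> carrier G" and ct: "set (c t) \<subseteq> carrier G" "word_prod G (c t) = g \<otimes> t \<otimes> inv g"
    and IH: "word_prod G (concat (map c u)) \<otimes> g = g \<otimes> word_prod G u"
    and cu: "set (concat (map c u)) \<subseteq> carrier G" and uc: "set u \<subseteq> carrier G"
    by auto
  have "word_prod G (concat (map c (t # u))) \<otimes> g
          = g \<otimes> t \<otimes> inv g \<otimes> (word_prod G (concat (map c u)) \<otimes> g)"
    using ct cu g t by (simp add: word_prod_append word_prod_closed m_assoc)
  also have "\<dots> = g \<otimes> word_prod G (t # u)"
    using g t uc by (simp add: IH word_prod_closed m_assoc inv_cancel_left)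
  finally show ?case .
qed

lemma inverted_orbit_translate:
  assumes act: "right_action G X act" and x0: "x0 \<in> X" and g: "g \<in> carrier G"
    and w: "set w \<subseteq> carrier G" and S: "S \<subseteq> carrier G"
    and c: "\<And>t. t \<in> set w \<Longrightarrow> set (c t) \<subseteq> S \<and> word_prod G (c t) = g \<otimes> t \<otimes> inv g"
    and v: "set v \<subseteq> S" "word_prod G v = g"
  shows "inverted_orbit G act (act x0 g) w \<subseteq> inverted_orbit G act x0 (concat (map c w) @ v)"
proof -
  let ?W = "concat (map c w) @ v"
  have "act (act x0 g) (word_prod G (drop i w)) \<in> inverted_orbit G act x0 ?W" for i
  proof -
    have dw: "set (drop i w) \<subseteq> carrier G"
      using w set_drop_subset by (metis order_trans)
    have cd: "set (c t) \<subseteq> carrier G" if "t \<in> set (drop i w)" for t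
      using c S that set_drop_subset[of i w] by blast
    have "word_prod G (concat (map c (drop i w))) \<otimes> g = g \<otimes> word_prod G (drop i w)"
      using c cd by (intro word_prod_concat_conjugates[OF g dw]) (auto dest: in_set_dropD)
    then have "word_prod G (concat (map c (drop i w)) @ v) = g \<otimes> word_prod G (drop i w)"
      using cd S v by (subst word_prod_append) auto
    then have "act (act x0 g) (word_prod G (drop i w))
                 = act x0 (word_prod G (concat (map c (drop i w)) @ v))"
      using act x0 g word_prod_closed[OF dw] unfolding right_action_def by auto
    moreover have "?W = concat (map c (take i w)) @ (concat (map c (drop i w)) @ v)"
      by (metis append_assoc append_take_drop_id concat_append map_append)
    ultimately show ?thesis
      using suffix_in_inverted_orbit[where p = "concat (map c (take i w))"] by simp
  qed
  moreover have "act x0 g \<in> inverted_orbit G act x0 ?W"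
    using suffix_in_inverted_orbit[of act x0 G v "concat (map c w)"] v(2) by simp
  ultimately show ?thesis unfolding inverted_orbit_def by auto
qed

lemma Delta_translate_growth_le:
  assumes act: "right_action G X act" and x0: "x0 \<in> X" and g: "g \<in> carrier G"
    and S: "finite S" "S \<noteq> {}" "monoid_generates G S"
    and T: "finite T" "T \<noteq> {}" "T \<subseteq> carrier G"
  shows "growth_le (Delta G act T (act x0 g)) (Delta G act S x0)"
proof -
  have Sc: "S \<subseteq> carrier G" using S(3) unfolding monoid_generates_def by auto
  have words: "\<exists>u. set u \<subseteq> S \<and> word_prod G u = h" if "h \<in> carrier G" for h
    using S(3) that unfolding monoid_generates_def by (metis in_lists_conv_set subsetI)
  have "\<forall>t\<in>T. \<exists>u. set u \<subseteq> S \<and> word_prod G u = g \<otimes> t \<otimes> inv g"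
    using T(3) g by (intro ballI words) auto
  then obtain c where c: "\<And>t. t \<in> T \<Longrightarrow> set (c t) \<subseteq> S \<and> word_prod G (c t) = g \<otimes> t \<otimes> inv g"
    by (metis bchoice)
  obtain v where v: "set v \<subseteq> S" "word_prod G v = g"
    using words[OF g] by blast
  define K where "K = Max ((\<lambda>t. length (c t)) ` T)"
  define C where "C = K + length v + 1"
  have "Delta G act T (act x0 g) n \<le> Delta G act S x0 (C * n)" if n: "n \<ge> 1" for n
  proof -
    obtain w where w: "w \<in> lists T" "length w = n"
      "Delta G act T (act x0 g) n = delta G act (act x0 g) w"
      using Delta_attained[OF T(1,2)] .
    let ?W = "concat (map c w) @ v"
    have wT: "set w \<subseteq> T" using w(1) by auto
    have "inverted_orbit G act (act x0 g) w \<subseteq> inverted_orbit G act x0 ?W"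
      using wT T(3) c by (intro inverted_orbit_translate[OF act x0 g _ Sc _ v]) auto
    then have "delta G act (act x0 g) w \<le> delta G act x0 ?W"
      unfolding delta_def by (intro card_mono finite_inverted_orbit)
    also have "\<dots> \<le> Delta G act S x0 (length ?W)"
      using v(1) c wT by (intro delta_le_Delta[OF S(1)]) (auto simp: in_lists_conv_set)
    also have "\<dots> \<le> Delta G act S x0 (C * n)"
    proof (rule Delta_mono[OF S(1,2)])
      have "length (concat (map c w)) \<le> K * n"
        using length_concat_map_le[of w c K] T(1) w unfolding K_def by auto
      moreover have "length v \<le> length v * n" using n by simp
      moreover have "C * n = K * n + length v * n + n" unfolding C_def by (simp add: algebra_simps)
      ultimately show "length ?W \<le> C * n" unfolding length_append by linarith
    qed
    finally show ?thesis using w by simp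
  qed
  moreover have "C > 0" unfolding C_def by simp
  ultimately show ?thesis
    unfolding growth_le_def eventually_sequentially by blast
qed

end

theorem lemma2p3:
  fixes G :: "('a, 'b) monoid_scheme" and X :: "'x set" and act :: "'x \<Rightarrow> 'a \<Rightarrow> 'x"
  assumes "group G" and "right_action G X act"
  shows "(\<forall>S1 S2 x0. finite S1 \<and> S1 \<noteq> {} \<and> monoid_generates G S1 \<and>
                     finite S2 \<and> S2 \<noteq> {} \<and> monoid_generates G S2 \<and> x0 \<in> X
            \<longrightarrow> growth_equiv (Delta G act S1 x0) (Delta G act S2 x0))
       \<and> (transitive_action G X act \<longrightarrow>
            (\<forall>S x0 x1. finite S \<and> S \<noteq> {} \<and> monoid_generates G S \<and> x0 \<in> X \<and> x1 \<in> X
            \<longrightarrow> growth_equiv (Delta G act S x0) (Delta G act S x1)))"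
proof -
  interpret group G by fact
  have translate: "growth_le (Delta G act T (act x g)) (Delta G act S x)"
    if "finite S" "S \<noteq> {}" "monoid_generates G S" "finite T" "T \<noteq> {}" "monoid_generates G T"
       "x \<in> X" "g \<in> carrier G" for S T x g
    using that Delta_translate_growth_le[OF assms(2)] unfolding monoid_generates_def by blast
  have act_one: "act x \<one>\<^bsub>G\<^esub> = x" if "x \<in> X" for x
    using assms(2) that unfolding right_action_def by blast
  show ?thesis
  proof (intro conjI allI impI)
    fix S1 S2 x0
    assume "finite S1 \<and> S1 \<noteq> {} \<and> monoid_generates G S1 \<and>
            finite S2 \<and> S2 \<noteq> {} \<and> monoid_generates G S2 \<and> x0 \<in> X"
    then show "growth_equiv (Delta G act S1 x0) (Delta G act S2 x0)"
      unfolding growth_equiv_def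
      using translate[of S1 S2 x0 "\<one>\<^bsub>G\<^esub>"] translate[of S2 S1 x0 "\<one>\<^bsub>G\<^esub>"] act_one
      by simp
  next
    fix S x0 x1
    assume "transitive_action G X act"
      and h: "finite S \<and> S \<noteq> {} \<and> monoid_generates G S \<and> x0 \<in> X \<and> x1 \<in> X"
    then obtain g g' where "g \<in> carrier G" "act x0 g = x1" "g' \<in> carrier G" "act x1 g' = x0"
      unfolding transitive_action_def by meson
    then show "growth_equiv (Delta G act S x0) (Delta G act S x1)"
      unfolding growth_equiv_def using h translate[of S S x0 g] translate[of S S x1 g'] by simp
  qed
qed

end
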